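(* Let $\mathcal{G}=(\mathcal{V},\mathcal{E})$ be a connected non-bipartite graph with node set $\mathcal{V}=\{1,\dots,N\}$, and let $\tilde{\mathcal{G}}=(\tilde{\mathcal{V}},\tilde{\mathcal{E}})$ be $\mathcal{G}$ with a self-loop added at every node, with adjacency matrix $\tilde A$ and diagonal degree matrix $\tilde D$. For $u\in\mathcal{V}$ let $\mathcal{N}(u)$ be the set of neighbours of $u$ in $\tilde{\mathcal{G}}$ and $\deg(u)=|\mathcal{N}(u)|$ (so $\tilde D=\operatorname{diag}(\deg(1),\dots,\deg(N))$). Random environment: let $\vec\xi=(\Theta^{(1)},\Theta^{(2)},\dots)$ be a sequence of independent, identically distributed random $\{0,1\}^{N\times N}$ matrices with entries $\theta^{(l)}(u,v)$, where $\theta^{(l)}(u,v)=0$ if $(u,v)\notin\tilde{\mathcal{E}}$, and for $(u,v)\in\tilde{\mathcal{E}}$, $\theta^{(l)}(u,v)$ is Bernoulli with $\mathbf P(\theta^{(l)}(u,v)=0)=\frac{1}{|\mathcal{E}|}$, $\mathbf P(\theta^{(l)}(u,v)=1)=1-\frac{1}{|\mathcal{E}|}$; for each $u$ the variables $\theta^{(l)}(u,v)$, $v\in\mathcal{N}(u)$, are independent. Let $\zeta^{(l)}_u=\sum_{v\in\mathcal{N}(u)}\theta^{(l)}(u,v)$ (so $\zeta^{(l)}_u$ is Binomial$(\deg(u),1-\frac1{|\mathcal{E}|})$), and define the random transition matrix $P(\Theta^{(l)})$ by $p(\Theta^{(l)};u,v)=\theta^{(l)}(u,v)/\zeta^{(l)}_u$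 when $\zeta^{(l)}_u>0$, and $p(\Theta^{(l)};u,\cdot)=\delta_u$ (the walk stays at $u$) when $\zeta^{(l)}_u=0$. Let $\vec V=(V_0,V_1,\dots)$ be a $\mathcal{V}$-valued process such that $(\vec V,\vec\xi)$ is a Markov chain in a random environment, i.e. for all $l\ge 1$ and $v_0,\dots,v_l\in\mathcal{V}$, $\mathbf P(V_l=v_l\mid V_0=v_0,\dots,V_{l-1}=v_{l-1},\vec\xi)=p(\Theta^{(l)};v_{l-1},v_l)$. Then, under the law $\mathbf P$ (averaging over the environment), $\vec V$ is a time-homogeneous Markov chain with transition matrix $$P_{\mathrm{drop}}=(I-\Gamma)\tilde D^{-1}\tilde A+\Gamma,\qquad \Gamma=\operatorname{diag}\Big(\tfrac{1}{|\mathcal{E}|^{\deg(1)}},\dots,\tfrac{1}{|\mathcal{E}|^{\deg(N)}}\Big).$$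
   Context: This models the DropEdge method applied to GCN: at each layer every edge of $\tilde{\mathcal G}$ is independently dropped, and message passing uses the row-normalized dropped adjacency matrix. $|\mathcal{E}|$ is the number of edges of $\mathcal{G}$. *)

theory Defs
  imports "HOL-Probability.Probability"
begin

definition simple_graph :: "nat \<Rightarrow> nat set set \<Rightarrow> bool" where
  "simple_graph N E \<longleftrightarrow> (\<forall>e\<in>E. card e = 2 \<and> e \<subseteq> {1..N})"

definition adj :: "nat set set \<Rightarrow> nat \<Rightarrow> nat \<Rightarrow> bool" where
  "adj E u v \<longleftrightarrow> u \<noteq> v \<and> {u, v} \<in> E"

definition connected_graph :: "nat \<Rightarrow> nat set set \<Rightarrow> bool" where
  "connected_graph N E \<longleftrightarrow>
     (\<forall>u\<in>{1..N}. \<forall>v\<in>{1..N}. (u, v) \<in> {(x, y). adj E x y}\<^sup>*)"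

definition bipartite :: "nat \<Rightarrow> nat set set \<Rightarrow> bool" where
  "bipartite N E \<longleftrightarrow>
     (\<exists>c :: nat \<Rightarrow> bool. \<forall>u\<in>{1..N}. \<forall>v\<in>{1..N}. adj E u v \<longrightarrow> c u \<noteq> c v)"

definition nbr :: "nat \<Rightarrow> nat set set \<Rightarrow> nat \<Rightarrow> nat set" where
  "nbr N E u = {v \<in> {1..N}. u \<in> {1..N} \<and> (v = u \<or> adj E u v)}"

definition deg :: "nat \<Rightarrow> nat set set \<Rightarrow> nat \<Rightarrow> nat" where
  "deg N E u = card (nbr N E u)"

text \<open>A realisation of the random matrix Theta is a function theta u v (True = 1, False = 0).\<close>

definition zeta :: "nat \<Rightarrow> nat set set \<Rightarrow> (nat \<Rightarrow> nat \<Rightarrow> bool) \<Rightarrow> nat \<Rightarrow> nat" where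
  "zeta N E \<theta> u = (\<Sum>v\<in>nbr N E u. of_bool (\<theta> u v))"

definition drop_trans :: "nat \<Rightarrow> nat set set \<Rightarrow> (nat \<Rightarrow> nat \<Rightarrow> bool) \<Rightarrow> nat \<Rightarrow> nat \<Rightarrow> real" where
  "drop_trans N E \<theta> u v =
     (if zeta N E \<theta> u > 0 then of_bool (\<theta> u v) / real (zeta N E \<theta> u)
      else of_bool (v = u))"

definition Atilde :: "nat \<Rightarrow> nat set set \<Rightarrow> nat \<Rightarrow> nat \<Rightarrow> real" where
  "Atilde N E u v = of_bool (v \<in> nbr N E u)"

definition Gamma :: "nat \<Rightarrow> nat set set \<Rightarrow> nat \<Rightarrow> real" where
  "Gamma N E u = 1 / real (card E) ^ deg N E u"

definition Pdrop :: "nat \<Rightarrow> nat set set \<Rightarrow> nat \<Rightarrow> nat \<Rightarrow> real" where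
  "Pdrop N E u v =
     (1 - Gamma N E u) * (Atilde N E u v / real (deg N E u)) + Gamma N E u * of_bool (u = v)"

definition env_sigma :: "'a measure \<Rightarrow> (nat \<Rightarrow> 'a \<Rightarrow> nat \<Rightarrow> nat \<Rightarrow> bool) \<Rightarrow> 'a set set" where
  "env_sigma M \<Theta> =
     sigma_sets (space M) {{\<omega> \<in> space M. \<Theta> l \<omega> u v} | l u v. 1 \<le> l}"

end

theory Submission
  imports Defs "HOL-Combinatorics.Transposition"
begin

(* Averaged over the environment, the path event {V_0 = v_0, ..., V_k = v_k} depends on the
   environment only through Theta^(1), ..., Theta^(k); by induction on k it is independent of the
   future environment sigma(Theta^(j) : j > k).  The Markov property in the random environment
   therefore factorises
     P(V_0..V_(k+1) = v_0..v_(k+1)) = P(V_0..V_k = v_0..v_k) * E[p(Theta^(k+1); v_k, v_(k+1))],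
   and it remains to average p(Theta; u, v).  The set S of kept edges at u is a random subset of
   N(u) in which every vertex is dropped independently with probability q = 1/|E|.  Swapping two
   vertices shows that every v in N(u) receives the same expected share E[1(v in S) / |S|]; the
   shares add up to P(S nonempty) = 1 - q^deg(u), and on S = {}, of probability q^deg(u) = Gamma(u),
   the walk stays at u. *)

lemma (in prob_space) expectation_sum_indicator:
  fixes g :: "'b \<Rightarrow> real"
  assumes "finite R" and "\<And>c. c \<in> R \<Longrightarrow> A c \<in> events"
  shows "expectation (\<lambda>\<omega>. \<Sum>c\<in>R. g c * indicator (A c) \<omega>) = (\<Sum>c\<in>R. g c * prob (A c))"
  using assms by (subst Bochner_Integration.integral_sum) (auto simp: less_top[symmetric])

lemma (in prob_space) expectation_finite_range:
  fixes f :: "'b \<Rightarrow> real"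
  assumes R: "finite R" and X: "\<And>\<omega>. \<omega> \<in> space M \<Longrightarrow> X \<omega> \<in> R"
    and level: "\<And>c. c \<in> R \<Longrightarrow> {\<omega> \<in> space M. X \<omega> = c} \<in> events"
  shows "expectation (\<lambda>\<omega>. f (X \<omega>)) = (\<Sum>c\<in>R. f c * prob {\<omega> \<in> space M. X \<omega> = c})"
proof -
  have "f (X \<omega>) = (\<Sum>c\<in>R. f c * indicator {\<omega> \<in> space M. X \<omega> = c} \<omega>)" if "\<omega> \<in> space M" for \<omega>
    using that X[OF that] R by (simp add: indicator_def if_distrib cong: if_cong)
  then have "expectation (\<lambda>\<omega>. f (X \<omega>))
      = expectation (\<lambda>\<omega>. \<Sum>c\<in>R. f c * indicator {\<omega> \<in> space M. X \<omega> = c} \<omega>)"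
    by (intro Bochner_Integration.integral_cong) auto
  also have "\<dots> = (\<Sum>c\<in>R. f c * prob {\<omega> \<in> space M. X \<omega> = c})"
    using R level by (rule expectation_sum_indicator)
  finally show ?thesis .
qed

lemma (in prob_space) expectation_indicator_mult_indep:
  fixes X :: "'a \<Rightarrow> real"
  assumes fin: "finite (X ` space M)" and level: "\<And>c. {\<omega> \<in> space M. X \<omega> = c} \<in> events"
    and B: "B \<in> events"
    and indep: "\<And>c. prob (B \<inter> {\<omega> \<in> space M. X \<omega> = c}) = prob B * prob {\<omega> \<in> space M. X \<omega> = c}"
  shows "expectation (\<lambda>\<omega>. indicator B \<omega> * X \<omega>) = prob B * expectation X"
proof -
  let ?R = "X ` space M"
  have "indicator B \<omega> * X \<omega> = (\<Sum>c\<in>?R. c * indicator (B \<inter> {\<omega> \<in> space M. X \<omega> = c}) \<omega>)"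
    if "\<omega> \<in> space M" for \<omega>
    using that fin by (simp add: indicator_def if_distrib cong: if_cong)
  then have "expectation (\<lambda>\<omega>. indicator B \<omega> * X \<omega>)
      = expectation (\<lambda>\<omega>. \<Sum>c\<in>?R. c * indicator (B \<inter> {\<omega> \<in> space M. X \<omega> = c}) \<omega>)"
    by (intro Bochner_Integration.integral_cong) auto
  also have "\<dots> = (\<Sum>c\<in>?R. c * prob (B \<inter> {\<omega> \<in> space M. X \<omega> = c}))"
    using fin level B by (intro expectation_sum_indicator) auto
  also have "\<dots> = prob B * (\<Sum>c\<in>?R. c * prob {\<omega> \<in> space M. X \<omega> = c})"
    by (simp add: indep sum_distrib_left mult.left_commute)
  also have "(\<Sum>c\<in>?R. c * prob {\<omega> \<in> space M. X \<omega> = c}) = expectation X"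
    using expectation_finite_range[OF fin _ level, where f = "\<lambda>x. x"] by simp
  finally show ?thesis .
qed

lemma (in prob_space) indep_vars_prob_Int_sigma_sets:
  assumes indep: "indep_vars M' X I" and i: "i \<in> I" and J: "J \<subseteq> I" "i \<notin> J"
    and A: "A \<in> sigma_sets (space M) (\<Union>j\<in>J. {X j -` Y \<inter> space M | Y. Y \<in> sets (M' j)})"
    and Y: "Y \<in> sets (M' i)"
  shows "prob (A \<inter> (X i -` Y \<inter> space M)) = prob A * prob (X i -` Y \<inter> space M)"
proof -
  define G where "G j = {X j -` Y \<inter> space M | Y. Y \<in> sets (M' j)}" for j
  define K where "K b = (if b then {i} else J)" for b
  have "indep_sets (\<lambda>b. sigma_sets (space M) (\<Union>j\<in>K b. G j)) UNIV"
  proof (rule indep_sets_collect_sigma)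
    show "indep_sets G (\<Union>b. K b)"
      using indep i J unfolding indep_vars_def2 G_def K_def
      by (auto intro: indep_sets_mono_index)
    show "Int_stable (G j)" for j
      unfolding Int_stable_def G_def
    proof clarify
      fix Y Z assume "Y \<in> sets (M' j)" "Z \<in> sets (M' j)"
      then show "\<exists>W. X j -` Y \<inter> space M \<inter> (X j -` Z \<inter> space M) = X j -` W \<inter> space M \<and> W \<in> sets (M' j)"
        by (intro exI[of _ "Y \<inter> Z"]) auto
    qed
    show "disjoint_family K"
      using J unfolding disjoint_family_on_def K_def by auto
  qed
  moreover have "A \<in> sigma_sets (space M) (\<Union>j\<in>K False. G j)"
    using A by (simp add: K_def G_def)
  moreover have "X i -` Y \<inter> space M \<in> sigma_sets (space M) (\<Union>j\<in>K True. G j)"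
    using Y by (auto simp: K_def G_def)
  ultimately have "prob (\<Inter>b. if b then X i -` Y \<inter> space M else A)
      = (\<Prod>b\<in>UNIV. prob (if b then X i -` Y \<inter> space M else A))"
    by (intro indep_setsD) auto
  then show ?thesis
    by (simp add: UNIV_bool Int_commute)
qed

lemma (in prob_space) prob_random_subset_eq:
  fixes X :: "'i \<Rightarrow> 'a \<Rightarrow> bool"
  assumes I: "finite I" and indep: "indep_vars (\<lambda>_. count_space UNIV) X I"
    and bern: "\<And>i. i \<in> I \<Longrightarrow> prob {\<omega> \<in> space M. \<not> X i \<omega>} = p"
    and T: "T \<subseteq> I"
  shows "{\<omega> \<in> space M. {i \<in> I. X i \<omega>} = T} \<in> events"
    and "prob {\<omega> \<in> space M. {i \<in> I. X i \<omega>} = T} = (\<Prod>i\<in>I. if i \<in> T then 1 - p else p)"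
proof -
  have events: "X i -` {b} \<inter> space M \<in> events" if "i \<in> I" for i b
    using indep that by (auto simp: indep_vars_def intro: measurable_sets)
  have prob: "prob (X i -` {i \<in> T} \<inter> space M) = (if i \<in> T then 1 - p else p)" if "i \<in> I" for i
  proof -
    have "X i -` {False} \<inter> space M = {\<omega> \<in> space M. \<not> X i \<omega>}"
      "X i -` {True} \<inter> space M = space M - {\<omega> \<in> space M. \<not> X i \<omega>}" by auto
    then show ?thesis
      using prob_compl[OF events[OF that, of False]] bern[OF that] by simp
  qed
  have "{\<omega> \<in> space M. {i \<in> I. X i \<omega>} = T} \<in> events
    \<and> prob {\<omega> \<in> space M. {i \<in> I. X i \<omega>} = T} = (\<Prod>i\<in>I. if i \<in> T then 1 - p else p)"
  proof (cases "I = {}")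
    case True
    then show ?thesis using T by (simp add: prob_space)
  next
    case False
    have "{\<omega> \<in> space M. {i \<in> I. X i \<omega>} = T} = (\<Inter>i\<in>I. X i -` {i \<in> T} \<inter> space M)"
      using False T by auto
    moreover have "prob (\<Inter>i\<in>I. X i -` {i \<in> T} \<inter> space M) = (\<Prod>i\<in>I. prob (X i -` {i \<in> T} \<inter> space M))"
      using False I by (intro indep_varsD[OF indep]) auto
    moreover have "(\<Inter>i\<in>I. X i -` {i \<in> T} \<inter> space M) \<in> events"
      using False I events by (intro sets.finite_INT) auto
    ultimately show ?thesis
      using prob by simp
  qed
  then show "{\<omega> \<in> space M. {i \<in> I. X i \<omega>} = T} \<in> events"
    "prob {\<omega> \<in> space M. {i \<in> I. X i \<omega>} = T} = (\<Prod>i\<in>I. if i \<in> T then 1 - p else p)"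
    by simp_all
qed

lemma sum_Pow_share_transpose:
  fixes f :: "bool \<Rightarrow> real"
  assumes A: "finite A" and ab: "a \<in> A" "b \<in> A"
  shows "(\<Sum>T\<in>Pow A. of_bool (a \<in> T) / card T * (\<Prod>x\<in>A. f (x \<in> T)))
       = (\<Sum>T\<in>Pow A. of_bool (b \<in> T) / card T * (\<Prod>x\<in>A. f (x \<in> T)))"
proof -
  let ?t = "Transposition.transpose a b"
  have bij: "bij_betw (image ?t) (Pow A) (Pow A)"
    using ab by (intro bij_betw_image_Pow) simp
  have "(\<Prod>x\<in>A. f (x \<in> ?t ` T)) = (\<Prod>x\<in>A. f (x \<in> T))" for T
  proof -
    have "(\<Prod>x\<in>A. f (x \<in> ?t ` T)) = (\<Prod>x\<in>A. f (?t x \<in> T))"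
      by (simp add: in_transpose_image_iff)
    also have "\<dots> = (\<Prod>x\<in>?t ` A. f (x \<in> T))"
      by (simp add: prod.reindex)
    finally show ?thesis using ab by simp
  qed
  moreover have "card (?t ` T) = card T" for T
    by (simp add: card_image)
  moreover have "a \<in> ?t ` T \<longleftrightarrow> b \<in> T" for T
    by (simp add: in_transpose_image_iff)
  ultimately show ?thesis
    by (subst sum.reindex_bij_betw[OF bij, symmetric]) simp
qed

lemma sum_Pow_share:
  fixes p :: real
  assumes A: "finite A"
  shows "(\<Sum>T\<in>Pow A. of_bool (v \<in> T) / card T * (\<Prod>x\<in>A. if x \<in> T then 1 - p else p))
       = of_bool (v \<in> A) * (1 - p ^ card A) / card A"
proof -
  define w where "w T = (\<Prod>x\<in>A. if x \<in> T then 1 - p else p)" for T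
  define s where "s y = (\<Sum>T\<in>Pow A. of_bool (y \<in> T) / card T * w T)" for y
  have s_eq: "s y = s v" if "y \<in> A" "v \<in> A" for y
    using sum_Pow_share_transpose[OF A that, of "\<lambda>b. if b then 1 - p else p"]
    by (simp add: s_def w_def)
  have "w T = (\<Prod>x\<in>T. 1 - p) * (\<Prod>x\<in>A - T. p)" if "T \<in> Pow A" for T
    using that A by (simp add: w_def prod.If_cases Int_absorb1 Diff_eq)
  then have w_sum: "(\<Sum>T\<in>Pow A. w T) = 1"
    using prod_add[OF A, of "\<lambda>_. 1 - p" "\<lambda>_. p"] by simp
  have "(\<Sum>y\<in>A. s y) = (\<Sum>T\<in>Pow A. (\<Sum>y\<in>A. of_bool (y \<in> T) / card T) * w T)"
    unfolding s_def by (subst sum.swap) (simp add: sum_distrib_right)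
  also have "\<dots> = (\<Sum>T\<in>Pow A. w T - of_bool (T = {}) * w T)"
  proof (intro sum.cong refl)
    fix T assume T: "T \<in> Pow A"
    then have "finite T" using A finite_subset by auto
    moreover have "A \<inter> T = T" using T by auto
    ultimately show "(\<Sum>y\<in>A. of_bool (y \<in> T) / card T) * w T = w T - of_bool (T = {}) * w T"
      using A by (auto simp: sum_divide_distrib[symmetric] Int_def)
  qed
  also have "\<dots> = 1 - w {}"
  proof -
    have "(\<Sum>T\<in>Pow A. of_bool (T = {}) * w T) = (\<Sum>T\<in>Pow A. if T = {} then w T else 0)"
      by (intro sum.cong) auto
    also have "\<dots> = w {}"
      using A by simp
    finally show ?thesis
      by (simp only: sum_subtractf w_sum)
  qed
  also have "\<dots> = 1 - p ^ card A"
    by (simp add: w_def)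
  finally have sum_s: "(\<Sum>y\<in>A. s y) = 1 - p ^ card A" .
  show ?thesis
  proof (cases "v \<in> A")
    case True
    have "(\<Sum>y\<in>A. s y) = (\<Sum>y\<in>A. s v)"
      using s_eq True by (intro sum.cong) blast+
    then have "card A * s v = 1 - p ^ card A"
      using sum_s by simp
    moreover have "card A > 0" using A True card_gt_0_iff by blast
    ultimately show ?thesis using True by (simp add: s_def w_def field_simps)
  next
    case False
    then show ?thesis by (auto intro!: sum.neutral)
  qed
qed

lemma finite_nbr: "finite (nbr N E u)"
  by (rule finite_subset[of _ "{1..N}"]) (auto simp: nbr_def)

lemma drop_trans_eq_share:
  assumes off: "\<And>v. v \<notin> nbr N E u \<Longrightarrow> \<not> \<theta> u v"
    and S: "S = {x \<in> nbr N E u. \<theta> u x}"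
  shows "drop_trans N E \<theta> u v = of_bool (v \<in> S) / card S + of_bool (v = u \<and> S = {})"
proof -
  have fin: "finite S"
    using finite_nbr by (simp add: S)
  have "zeta N E \<theta> u = card S"
    using finite_nbr by (simp add: zeta_def S Int_def)
  moreover have "\<theta> u v \<longleftrightarrow> v \<in> S"
    using off by (auto simp: S)
  ultimately show ?thesis
    using fin by (auto simp: drop_trans_def card_gt_0_iff)
qed

lemma finite_range_drop_trans: "finite (range (\<lambda>\<theta>. drop_trans N E \<theta> u v))"
proof (rule finite_subset)
  show "range (\<lambda>\<theta>. drop_trans N E \<theta> u v) \<subseteq> {0, 1} \<union> (\<lambda>n. 1 / real n) ` {..card (nbr N E u)}"
  proof (rule image_subsetI)
    fix \<theta> :: "nat \<Rightarrow> nat \<Rightarrow> bool"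
    have "zeta N E \<theta> u \<le> card (nbr N E u)"
      using finite_nbr by (simp add: zeta_def card_mono)
    then show "drop_trans N E \<theta> u v \<in> {0, 1} \<union> (\<lambda>n. 1 / real n) ` {..card (nbr N E u)}"
      by (auto simp: drop_trans_def)
  qed
qed simp

lemma measurable_drop_trans:
  assumes [measurable]: "\<And>x y. (\<lambda>\<omega>. \<Theta> \<omega> x y) \<in> M \<rightarrow>\<^sub>M count_space UNIV"
  shows "(\<lambda>\<omega>. drop_trans N E (\<Theta> \<omega>) u v) \<in> borel_measurable M"
  unfolding drop_trans_def zeta_def by measurable

lemma (in prob_space) expectation_drop_trans:
  fixes \<theta> :: "'a \<Rightarrow> nat \<Rightarrow> nat \<Rightarrow> bool"
  assumes off: "\<And>\<omega> v. \<omega> \<in> space M \<Longrightarrow> v \<notin> nbr N E u \<Longrightarrow> \<not> \<theta> \<omega> u v"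
    and bern: "\<And>v. v \<in> nbr N E u \<Longrightarrow> prob {\<omega> \<in> space M. \<not> \<theta> \<omega> u v} = 1 / real (card E)"
    and row: "indep_vars (\<lambda>_. count_space UNIV) (\<lambda>v \<omega>. \<theta> \<omega> u v) (nbr N E u)"
  shows "expectation (\<lambda>\<omega>. drop_trans N E (\<theta> \<omega>) u v) = Pdrop N E u v"
proof -
  define A where "A = nbr N E u"
  define p where "p = 1 / real (card E)"
  define S where "S \<omega> = {x \<in> A. \<theta> \<omega> u x}" for \<omega>
  define h where "h T = of_bool (v \<in> T) / card T + of_bool (v = u \<and> T = {})" for T :: "nat set"
  define w where "w T = (\<Prod>x\<in>A. if x \<in> T then 1 - p else p)" for T
  have A: "finite A"
    unfolding A_def by (rule finite_nbr)
  have level: "{\<omega> \<in> space M. S \<omega> = T} \<in> events" "prob {\<omega> \<in> space M. S \<omega> = T} = w T"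
    if "T \<in> Pow A" for T
    using prob_random_subset_eq[OF A row[folded A_def] bern[folded A_def p_def]] that
    by (simp_all add: S_def w_def)
  have "drop_trans N E (\<theta> \<omega>) u v = h (S \<omega>)" if "\<omega> \<in> space M" for \<omega>
    unfolding h_def by (rule drop_trans_eq_share) (use off that in \<open>auto simp: S_def A_def\<close>)
  then have "expectation (\<lambda>\<omega>. drop_trans N E (\<theta> \<omega>) u v) = expectation (\<lambda>\<omega>. h (S \<omega>))"
    by (intro Bochner_Integration.integral_cong) auto
  also have "\<dots> = (\<Sum>T\<in>Pow A. h T * w T)"
    using expectation_finite_range[where R = "Pow A" and X = S and f = h] A level
    by (auto simp: S_def)
  also have "\<dots> = (\<Sum>T\<in>Pow A. of_bool (v \<in> T) / card T * w T) + of_bool (v = u) * w {}"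
    using A by (simp add: h_def distrib_right sum.distrib of_bool_conj)
  also have "\<dots> = of_bool (v \<in> A) * (1 - p ^ card A) / card A + of_bool (v = u) * p ^ card A"
    using sum_Pow_share[OF A] by (simp add: w_def)
  also have "\<dots> = Pdrop N E u v"
    by (simp add: Pdrop_def Gamma_def Atilde_def deg_def A_def p_def power_one_over)
  finally show ?thesis .
qed

locale dropedge_walk = prob_space M
  for M :: "'a measure" +
  fixes N :: nat and E :: "nat set set"
    and \<Theta> :: "nat \<Rightarrow> 'a \<Rightarrow> nat \<Rightarrow> nat \<Rightarrow> bool"
    and V :: "nat \<Rightarrow> 'a \<Rightarrow> nat"
  assumes env_indep: "indep_vars (\<lambda>_. count_space UNIV) \<Theta> {1..}"
    and env_off: "\<And>l \<omega> u v. 1 \<le> l \<Longrightarrow> \<omega> \<in> space M \<Longrightarrow> v \<notin> nbr N E u \<Longrightarrow> \<not> \<Theta> l \<omega> u v"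
    and env_bern: "\<And>l u v. 1 \<le> l \<Longrightarrow> u \<in> {1..N} \<Longrightarrow> v \<in> nbr N E u \<Longrightarrow>
        prob {\<omega> \<in> space M. \<not> \<Theta> l \<omega> u v} = 1 / real (card E)"
    and env_row: "\<And>l u. 1 \<le> l \<Longrightarrow> u \<in> {1..N} \<Longrightarrow>
        indep_vars (\<lambda>_. count_space UNIV) (\<lambda>v \<omega>. \<Theta> l \<omega> u v) (nbr N E u)"
    and V_meas: "\<And>l. V l \<in> M \<rightarrow>\<^sub>M count_space UNIV"
    and V_range: "\<And>l \<omega>. \<omega> \<in> space M \<Longrightarrow> V l \<omega> \<in> {1..N}"
    and V0_indep: "\<And>v A. A \<in> env_sigma M \<Theta> \<Longrightarrow>
        prob ({\<omega> \<in> space M. V 0 \<omega> = v} \<inter> A) = prob {\<omega> \<in> space M. V 0 \<omega> = v} * prob A"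
    and MCRE: "\<And>l vs A. 1 \<le> l \<Longrightarrow> (\<forall>i\<le>l. vs i \<in> {1..N}) \<Longrightarrow> A \<in> env_sigma M \<Theta> \<Longrightarrow>
        prob ({\<omega> \<in> space M. \<forall>i\<le>l. V i \<omega> = vs i} \<inter> A)
          = (\<integral>\<omega>. indicator ({\<omega> \<in> space M. \<forall>i<l. V i \<omega> = vs i} \<inter> A) \<omega>
                    * drop_trans N E (\<Theta> l \<omega>) (vs (l - 1)) (vs l) \<partial>M)"
begin

definition future_env :: "nat \<Rightarrow> 'a measure" where
  "future_env k = sigma (space M) {{\<omega> \<in> space M. \<Theta> j \<omega> x y} | j x y. k < j}"

definition path_event :: "nat \<Rightarrow> (nat \<Rightarrow> nat) \<Rightarrow> 'a set" where
  "path_event k vs = {\<omega> \<in> space M. \<forall>i\<le>k. V i \<omega> = vs i}"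

lemma space_future_env [simp]: "space (future_env k) = space M"
  by (simp add: future_env_def space_measure_of_conv)

lemma sets_future_env:
  "sets (future_env k) = sigma_sets (space M) {{\<omega> \<in> space M. \<Theta> j \<omega> x y} | j x y. k < j}"
  unfolding future_env_def by (rule sets_measure_of) blast

lemma env_preimage_eq: "{\<omega> \<in> space M. \<Theta> j \<omega> x y} = \<Theta> j -` {\<theta>. \<theta> x y} \<inter> space M"
  by auto

lemma env_event:
  assumes "1 \<le> j"
  shows "{\<omega> \<in> space M. \<Theta> j \<omega> x y} \<in> events"
proof -
  have "\<Theta> j \<in> M \<rightarrow>\<^sub>M count_space UNIV"
    using env_indep assms by (simp add: indep_vars_def)
  then show ?thesis
    unfolding env_preimage_eq by (rule measurable_sets) simp
qed

lemma sets_future_env_subset_events: "sets (future_env k) \<subseteq> events"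
  unfolding sets_future_env by (intro sets.sigma_sets_subset) (auto intro: env_event)

lemma sets_future_env_Suc_subset: "sets (future_env (Suc k)) \<subseteq> sets (future_env k)"
  unfolding sets_future_env by (rule sigma_sets_mono') force

lemma sets_future_env_subset_env_sigma: "sets (future_env k) \<subseteq> env_sigma M \<Theta>"
  unfolding sets_future_env env_sigma_def by (rule sigma_sets_mono') force

lemma measurable_future_env_step:
  assumes "k < l"
  shows "(\<lambda>\<omega>. drop_trans N E (\<Theta> l \<omega>) a b) \<in> borel_measurable (future_env k)"
proof (rule measurable_drop_trans)
  show "(\<lambda>\<omega>. \<Theta> l \<omega> x y) \<in> future_env k \<rightarrow>\<^sub>M count_space UNIV" for x y
    unfolding pred_def space_future_env sets_future_env
    by (rule sigma_sets.Basic) (use assms in blast)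
qed

lemma level_set_future_env:
  fixes f :: "'a \<Rightarrow> real"
  assumes "f \<in> borel_measurable (future_env k)"
  shows "{\<omega> \<in> space M. f \<omega> = c} \<in> sets (future_env k)"
  using measurable_sets[OF assms borel_closed[OF closed_singleton]]
  by (simp add: vimage_def Int_def conj_commute)

lemma step_indep_future_env:
  assumes l: "1 \<le> l" and A: "A \<in> sets (future_env l)"
  shows "prob (A \<inter> {\<omega> \<in> space M. drop_trans N E (\<Theta> l \<omega>) a b = c})
       = prob A * prob {\<omega> \<in> space M. drop_trans N E (\<Theta> l \<omega>) a b = c}"
proof -
  let ?G = "\<Union>j\<in>{Suc l..}. {\<Theta> j -` Y \<inter> space M | Y. Y \<in> sets (count_space UNIV)}"
  have "{{\<omega> \<in> space M. \<Theta> j \<omega> x y} | j x y. l < j} \<subseteq> ?G"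
  proof clarify
    fix j x y assume "l < j"
    then have "j \<in> {Suc l..}"
      by simp
    moreover have "{\<omega> \<in> space M. \<Theta> j \<omega> x y} \<in> {\<Theta> j -` Y \<inter> space M | Y. Y \<in> sets (count_space UNIV)}"
      unfolding env_preimage_eq by (intro CollectI exI[of _ "{\<theta>. \<theta> x y}"]) simp
    ultimately show "{\<omega> \<in> space M. \<Theta> j \<omega> x y} \<in> ?G"
      by (rule UN_I)
  qed
  then have "A \<in> sigma_sets (space M) ?G"
    using A unfolding sets_future_env by (rule sigma_sets_mono'[THEN subsetD])
  then have "prob (A \<inter> (\<Theta> l -` {\<theta>. drop_trans N E \<theta> a b = c} \<inter> space M))
      = prob A * prob (\<Theta> l -` {\<theta>. drop_trans N E \<theta> a b = c} \<inter> space M)"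
    using l by (intro indep_vars_prob_Int_sigma_sets[OF env_indep]) simp_all
  moreover have "\<Theta> l -` {\<theta>. drop_trans N E \<theta> a b = c} \<inter> space M
      = {\<omega> \<in> space M. drop_trans N E (\<Theta> l \<omega>) a b = c}"
    by auto
  ultimately show ?thesis
    by simp
qed

lemma expectation_step:
  assumes "1 \<le> l" "a \<in> {1..N}"
  shows "expectation (\<lambda>\<omega>. drop_trans N E (\<Theta> l \<omega>) a b) = Pdrop N E a b"
  using env_off[OF assms(1)] env_bern[OF assms] env_row[OF assms]
  by (rule expectation_drop_trans[where \<theta> = "\<Theta> l"])

lemma path_event_events: "path_event k vs \<in> events"
proof -
  have "path_event k vs = (\<Inter>i\<in>{..k}. V i -` {vs i} \<inter> space M)"
    by (auto simp: path_event_def)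
  then show ?thesis
    by (simp only:) (intro sets.finite_INT measurable_sets[OF V_meas], auto)
qed

lemma prob_path_event_Suc_Int:
  assumes indep_k: "\<And>A. A \<in> sets (future_env k) \<Longrightarrow> prob (path_event k vs \<inter> A) = prob (path_event k vs) * prob A"
    and vs: "\<forall>i\<le>Suc k. vs i \<in> {1..N}" and A: "A \<in> sets (future_env (Suc k))"
  shows "prob (path_event (Suc k) vs \<inter> A) = prob (path_event k vs) * prob A * Pdrop N E (vs k) (vs (Suc k))"
proof -
  let ?g = "\<lambda>\<omega>. drop_trans N E (\<Theta> (Suc k) \<omega>) (vs k) (vs (Suc k))"
  let ?X = "\<lambda>\<omega>. indicator A \<omega> * ?g \<omega>"
  have A_k: "A \<in> sets (future_env k)"
    using A sets_future_env_Suc_subset by blast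
  have g_meas: "?g \<in> borel_measurable (future_env k)"
    by (rule measurable_future_env_step) simp
  have "?g ` space M \<subseteq> range (\<lambda>\<theta>. drop_trans N E \<theta> (vs k) (vs (Suc k)))"
    by blast
  then have finite_g: "finite (?g ` space M)"
    by (rule finite_subset) (rule finite_range_drop_trans)
  have "?X ` space M \<subseteq> insert 0 (?g ` space M)"
    by (auto simp: indicator_def)
  then have finite_X: "finite (?X ` space M)"
    by (rule finite_subset) (simp add: finite_g)
  have "prob (path_event (Suc k) vs \<inter> A) = expectation (\<lambda>\<omega>. indicator (path_event k vs \<inter> A) \<omega> * ?g \<omega>)"
  proof -
    have "A \<in> env_sigma M \<Theta>"
      using A sets_future_env_subset_env_sigma by blast
    moreover have "{\<omega> \<in> space M. \<forall>i<Suc k. V i \<omega> = vs i} = path_event k vs"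
      by (auto simp: path_event_def less_Suc_eq_le)
    ultimately show ?thesis
      using MCRE[of "Suc k" vs A] vs by (simp add: path_event_def)
  qed
  also have "\<dots> = expectation (\<lambda>\<omega>. indicator (path_event k vs) \<omega> * ?X \<omega>)"
    by (simp add: indicator_inter_arith mult.assoc)
  \<comment> \<open>?X only involves A and Theta^(k+1), so it is measurable for the future environment after
    time k and the induction hypothesis applies.\<close>
  also have "\<dots> = prob (path_event k vs) * expectation ?X"
  proof (rule expectation_indicator_mult_indep[OF finite_X _ path_event_events])
    have "?X \<in> borel_measurable (future_env k)"
      using A_k g_meas by (intro borel_measurable_times borel_measurable_indicator) auto
    then have "{\<omega> \<in> space M. ?X \<omega> = c} \<in> sets (future_env k)" for c
      by (rule level_set_future_env)
    then show "{\<omega> \<in> space M. ?X \<omega> = c} \<in> events"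
      "prob (path_event k vs \<inter> {\<omega> \<in> space M. ?X \<omega> = c})
         = prob (path_event k vs) * prob {\<omega> \<in> space M. ?X \<omega> = c}" for c
      using sets_future_env_subset_events indep_k by blast+
  qed
  also have "expectation ?X = prob A * expectation ?g"
  proof (rule expectation_indicator_mult_indep[OF finite_g])
    show "{\<omega> \<in> space M. ?g \<omega> = c} \<in> events" for c
      using level_set_future_env[OF g_meas] sets_future_env_subset_events by blast
    show "A \<in> events"
      using A sets_future_env_subset_events by blast
    show "prob (A \<inter> {\<omega> \<in> space M. ?g \<omega> = c}) = prob A * prob {\<omega> \<in> space M. ?g \<omega> = c}" for c
      using A by (rule step_indep_future_env[rotated]) simp
  qed
  also have "expectation ?g = Pdrop N E (vs k) (vs (Suc k))"
    using vs by (intro expectation_step) auto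
  finally show ?thesis
    by (simp add: mult.assoc)
qed

lemma path_event_Int_space [simp]: "path_event k vs \<inter> space M = path_event k vs"
  unfolding path_event_def by blast

lemma space_in_future_env: "space M \<in> sets (future_env k)"
  using sets.top[of "future_env k"] by simp

lemma path_event_eq_empty:
  assumes "i \<le> k" "vs i \<notin> {1..N}"
  shows "path_event k vs = {}"
proof -
  have "\<omega> \<notin> path_event k vs" for \<omega>
    using V_range[of \<omega> i] assms by (auto simp: path_event_def)
  then show ?thesis
    by blast
qed

lemma path_event_indep_future_env:
  "A \<in> sets (future_env k) \<Longrightarrow> prob (path_event k vs \<inter> A) = prob (path_event k vs) * prob A"
proof (induction k arbitrary: vs A)
  case 0
  have "path_event 0 vs = {\<omega> \<in> space M. V 0 \<omega> = vs 0}"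
    by (auto simp: path_event_def)
  moreover have "A \<in> env_sigma M \<Theta>"
    using 0 sets_future_env_subset_env_sigma by blast
  ultimately show ?case
    using V0_indep by simp
next
  case (Suc k)
  show ?case
  proof (cases "\<forall>i\<le>Suc k. vs i \<in> {1..N}")
    case True
    have "prob (path_event (Suc k) vs) = prob (path_event k vs) * Pdrop N E (vs k) (vs (Suc k))"
      using prob_path_event_Suc_Int[OF Suc.IH True space_in_future_env] by (simp add: prob_space)
    then show ?thesis
      using prob_path_event_Suc_Int[OF Suc.IH True Suc.prems] by simp
  next
    case False
    then show ?thesis
      using path_event_eq_empty by auto
  qed
qed

lemma prob_path_event_Suc:
  assumes "\<forall>i\<le>Suc k. vs i \<in> {1..N}"
  shows "prob (path_event (Suc k) vs) = prob (path_event k vs) * Pdrop N E (vs k) (vs (Suc k))"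
  using prob_path_event_Suc_Int[OF path_event_indep_future_env assms space_in_future_env]
  by (simp add: prob_space)

end

theorem theorem8:
  fixes N :: nat and E :: "nat set set" and M :: "'a measure"
    and \<Theta> :: "nat \<Rightarrow> 'a \<Rightarrow> nat \<Rightarrow> nat \<Rightarrow> bool"
    and V :: "nat \<Rightarrow> 'a \<Rightarrow> nat"
  assumes graph: "simple_graph N E"
    and conn: "connected_graph N E"
    and nonbip: "\<not> bipartite N E"
    and P: "prob_space M"
    and env_meas: "\<And>l. 1 \<le> l \<Longrightarrow> \<Theta> l \<in> M \<rightarrow>\<^sub>M count_space UNIV"
    and env_indep: "prob_space.indep_vars M (\<lambda>_. count_space UNIV) \<Theta> {1..}"
    and env_ident: "\<And>l. 1 \<le> l \<Longrightarrow>
        distr M (count_space UNIV) (\<Theta> l) = distr M (count_space UNIV) (\<Theta> 1)"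
    and env_off: "\<And>l \<omega> u v. 1 \<le> l \<Longrightarrow> \<omega> \<in> space M \<Longrightarrow> v \<notin> nbr N E u \<Longrightarrow> \<not> \<Theta> l \<omega> u v"
    and env_bern: "\<And>l u v. 1 \<le> l \<Longrightarrow> u \<in> {1..N} \<Longrightarrow> v \<in> nbr N E u \<Longrightarrow>
        measure M {\<omega> \<in> space M. \<not> \<Theta> l \<omega> u v} = 1 / real (card E)"
    and env_row: "\<And>l u. 1 \<le> l \<Longrightarrow> u \<in> {1..N} \<Longrightarrow>
        prob_space.indep_vars M (\<lambda>_. count_space UNIV) (\<lambda>v \<omega>. \<Theta> l \<omega> u v) (nbr N E u)"
    and V_meas: "\<And>l. V l \<in> M \<rightarrow>\<^sub>M count_space UNIV"
    and V_range: "\<And>l \<omega>. \<omega> \<in> space M \<Longrightarrow> V l \<omega> \<in> {1..N}"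
    and V0_indep: "\<And>v A. A \<in> env_sigma M \<Theta> \<Longrightarrow>
        measure M ({\<omega> \<in> space M. V 0 \<omega> = v} \<inter> A)
          = measure M {\<omega> \<in> space M. V 0 \<omega> = v} * measure M A"
    and MCRE: "\<And>l vs A. 1 \<le> l \<Longrightarrow> (\<forall>i\<le>l. vs i \<in> {1..N}) \<Longrightarrow> A \<in> env_sigma M \<Theta> \<Longrightarrow>
        measure M ({\<omega> \<in> space M. \<forall>i\<le>l. V i \<omega> = vs i} \<inter> A)
          = (\<integral>\<omega>. indicator ({\<omega> \<in> space M. \<forall>i<l. V i \<omega> = vs i} \<inter> A) \<omega>
                    * drop_trans N E (\<Theta> l \<omega>) (vs (l - 1)) (vs l) \<partial>M)"
  shows "\<forall>l\<ge>1. \<forall>vs. (\<forall>i\<le>l. vs i \<in> {1..N}) \<longrightarrow>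
           measure M {\<omega> \<in> space M. \<forall>i\<le>l. V i \<omega> = vs i}
             = measure M {\<omega> \<in> space M. \<forall>i<l. V i \<omega> = vs i} * Pdrop N E (vs (l - 1)) (vs l)"
proof -
  \<comment> \<open>graph, conn, nonbip and env_ident matter only for the long-run behaviour of P_drop, not for
    its being the transition matrix; env_meas is implied by env_indep.\<close>
  interpret dropedge_walk M N E \<Theta> V
    by (intro dropedge_walk.intro[OF P] dropedge_walk_axioms.intro)
      (fact env_indep env_off env_bern env_row V_meas V_range V0_indep MCRE)+
  show ?thesis
  proof (intro allI impI)
    fix l :: nat and vs :: "nat \<Rightarrow> nat"
    assume "1 \<le> l" and vs: "\<forall>i\<le>l. vs i \<in> {1..N}"
    then obtain k where l: "l = Suc k"
      by (cases l) auto
    have upto_l: "{\<omega> \<in> space M. \<forall>i\<le>l. V i \<omega> = vs i} = path_event (Suc k) vs"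
      unfolding l path_event_def ..
    have before_l: "{\<omega> \<in> space M. \<forall>i<l. V i \<omega> = vs i} = path_event k vs"
      unfolding l path_event_def less_Suc_eq_le ..
    have "prob (path_event (Suc k) vs) = prob (path_event k vs) * Pdrop N E (vs k) (vs (Suc k))"
      using vs unfolding l by (rule prob_path_event_Suc)
    then show "prob {\<omega> \<in> space M. \<forall>i\<le>l. V i \<omega> = vs i}
        = prob {\<omega> \<in> space M. \<forall>i<l. V i \<omega> = vs i} * Pdrop N E (vs (l - 1)) (vs l)"
      using upto_l before_l l by simp
  qed
qed

end
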